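(* Let $A$ be a central simple algebra of degree $n$ over a field $k$, and let $I\subset A$ be a left ideal of $k$-dimension $n$. Fix an integer $j$. Then the map $J\mapsto J^\circ I$ is a canonical bijection from the set of left ideals $J$ of $A$ with $I\subset J$ and $\dim_k J=nj$ onto the set of $k$-subspaces $W\subset I^\circ I$ with $\dim_k W=n-j$. (Its inverse is $W\mapsto{}^\circ(WA)$.)
   Context: For $I\subset A$: right annihilator $I^\circ=\{a\in A: Ia=0\}$, left annihilator ${}^\circ I=\{a\in A: aI=0\}$. Products of subspaces $UW$ denote the $k$-span of products $uw$. *)

theory Defs
  imports Complex_Main
begin

definition k_algebra :: "('k::field \<Rightarrow> 'a::ring_1 \<Rightarrow> 'a) \<Rightarrow> bool" where
  "k_algebra sc \<longleftrightarrow> vector_space sc \<and>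
     (\<forall>c x y. sc c (x * y) = sc c x * y) \<and> (\<forall>c x y. sc c (x * y) = x * sc c y)"

definition fin_dim_alg :: "('k::field \<Rightarrow> 'a::ring_1 \<Rightarrow> 'a) \<Rightarrow> bool" where
  "fin_dim_alg sc \<longleftrightarrow> (\<exists>B. finite B \<and> module.span sc B = UNIV)"

definition left_ideal :: "'a::ring_1 set \<Rightarrow> bool" where
  "left_ideal J \<longleftrightarrow> 0 \<in> J \<and> (\<forall>x\<in>J. \<forall>y\<in>J. x + y \<in> J) \<and> (\<forall>a x. x \<in> J \<longrightarrow> a * x \<in> J)"

definition two_sided_ideal :: "'a::ring_1 set \<Rightarrow> bool" where
  "two_sided_ideal J \<longleftrightarrow> left_ideal J \<and> (\<forall>a x. x \<in> J \<longrightarrow> x * a \<in> J)"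

definition central_alg :: "('k::field \<Rightarrow> 'a::ring_1 \<Rightarrow> 'a) \<Rightarrow> bool" where
  "central_alg sc \<longleftrightarrow> {z. \<forall>x. z * x = x * z} = range (\<lambda>c. sc c 1)"

text \<open>Simple: nonzero (automatic for ring_1, since 0 \<noteq> 1) and only trivial two-sided ideals.\<close>
definition simple_alg :: "'a::ring_1 itself \<Rightarrow> bool" where
  "simple_alg _ \<longleftrightarrow> (\<forall>J::'a set. two_sided_ideal J \<longrightarrow> J = {0} \<or> J = UNIV)"

definition csa_of_degree :: "('k::field \<Rightarrow> 'a::ring_1 \<Rightarrow> 'a) \<Rightarrow> nat \<Rightarrow> bool" where
  "csa_of_degree sc n \<longleftrightarrow> k_algebra sc \<and> fin_dim_alg sc \<and> central_alg sc \<and>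
     simple_alg TYPE('a) \<and> vector_space.dim sc (UNIV::'a set) = n ^ 2"

text \<open>Right annihilator I\<degree> and left annihilator \<degree>I.\<close>
definition rann :: "'a::ring_1 set \<Rightarrow> 'a set" where
  "rann I = {a. \<forall>x\<in>I. x * a = 0}"

definition lann :: "'a::ring_1 set \<Rightarrow> 'a set" where
  "lann I = {a. \<forall>x\<in>I. a * x = 0}"

definition sprod :: "('k::field \<Rightarrow> 'a::ring_1 \<Rightarrow> 'a) \<Rightarrow> 'a set \<Rightarrow> 'a set \<Rightarrow> 'a set" where
  "sprod sc U W = module.span sc {u * w | u w. u \<in> U \<and> w \<in> W}"

end

theory Submission
  imports Defs
begin

text \<open>A left ideal I of dimension n in a simple algebra A of dimension n^2 is faithful: its
  left annihilator is a proper two-sided ideal, hence 0. Counting dimensions along the maps a \<mapsto> a v with v \<in> I gives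
  dim (lann W) + n dim W = n^2 for every subspace W of I. Consequently A acts densely on I
  (independent vectors of I can be sent to arbitrary vectors of I), and rann (lann W) \<inter> I = W.
  Conversely, a left ideal J contains an element x killing exactly rann J \<inter> I inside I, namely
  one whose kernel on I is minimal; then dim J \<ge> dim (A x) = n dim (x I) = dim (lann (rann J \<inter> I)),
  so J = lann (rann J \<inter> I). Finally I has a right unit, so the product (rann J) I is just
  rann J \<inter> I, and J \<mapsto> rann J \<inter> I and W \<mapsto> lann W are inverse bijections; the dimension
  formula turns dim J = n j into dim W = n - j.\<close>

lemma left_ideal_lann: "left_ideal (lann S)"
  unfolding left_ideal_def lann_def by (auto simp: distrib_right mult.assoc)

lemma lann_eq_0_if_simple:
  assumes "simple_alg TYPE('a::ring_1)" and "left_ideal I" and "I \<noteq> {0::'a}"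
  shows "lann I = {0}"
proof -
  have "two_sided_ideal (lann I)"
    using left_ideal_lann assms(2) unfolding two_sided_ideal_def left_ideal_def lann_def
    by (auto simp: mult.assoc)
  moreover have "1 \<notin> lann I"
    using assms(3) left_ideal_def[of I] assms(2) by (auto simp: lann_def)
  ultimately show ?thesis
    using assms(1) unfolding simple_alg_def by blast
qed

lemma int_mult_eq_iff_diff_eq:
  fixes d w n :: nat and j :: int
  assumes "d + n * w = n\<^sup>2" and "n > 0"
  shows "int d = int n * j \<longleftrightarrow> int w = int n - j"
proof -
  have "int d = int n * (int n - int w)"
    using arg_cong[OF assms(1), of int] by (simp add: power2_eq_square algebra_simps)
  then show ?thesis
    using assms(2) by auto
qed

context finite_dimensional_vector_space
begin

lemma ex_complement_subspace:
  assumes K: "subspace K" and V: "subspace V" and "K \<subseteq> V"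
  obtains C where "span C \<subseteq> V" and "V = {x + y |x y. x \<in> K \<and> y \<in> span C}"
    and "K \<inter> span C \<subseteq> {0}" and "dim V = dim K + dim (span C)"
proof -
  obtain B0 where B0: "B0 \<subseteq> K" "independent B0" "span B0 = K" "card B0 = dim K"
    using basis_subspace_exists[OF K] by blast
  obtain B where B: "B0 \<subseteq> B" "B \<subseteq> V" "independent B" "V \<subseteq> span B"
    by (rule maximal_independent_subset_extend[of B0 V]) (use B0 assms(3) in auto)
  define C where "C = B - B0"
  have "finite B"
    using B(3) by (rule finiteI_independent)
  then have "card B = card B0 + card C"
    using card_Diff_subset[OF finite_subset[OF B(1)] B(1)] card_mono[OF _ B(1)] C_def by simp
  then have dim_V: "dim V = dim K + card C"
    using basis_card_eq_dim[OF B(2) B(4) B(3)] B0(4) by simp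
  have dim_C: "dim (span C) = card C"
    using independent_mono[OF B(3), of C] C_def by (simp add: dim_eq_card_independent)
  have C_V: "span C \<subseteq> V"
    by (rule span_minimal[OF _ V]) (use B(2) C_def in blast)
  have V_sum: "V = {x + y |x y. x \<in> K \<and> y \<in> span C}"
  proof -
    have "B = B0 \<union> C"
      using B(1) C_def by blast
    then have "V = span (B0 \<union> C)"
      using span_subspace[OF B(2) B(4) V] by simp
    then show ?thesis
      by (simp only: span_Un B0(3))
  qed
  have "dim V + dim (K \<inter> span C) = dim K + dim (span C)"
    using dim_sums_Int[OF K subspace_span] V_sum by simp
  then have "K \<inter> span C \<subseteq> {0}"
    using dim_V dim_C by simp
  then show thesis
    using that[OF C_V V_sum] dim_V dim_C by simp
qed

lemma dim_kernel_plus_dim_image: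
  assumes V: "subspace V" and f: "module_hom scale scale f"
  shows "dim V = dim {x\<in>V. f x = 0} + dim (f ` V)"
proof -
  interpret f: module_hom scale scale f by fact
  interpret pair: finite_dimensional_vector_space_pair_1 scale Basis scale by unfold_locales
  define K where "K = {x\<in>V. f x = 0}"
  have "subspace K"
    using subspace_inter[OF V f.subspace_kernel] by (simp add: K_def Int_def)
  moreover note V
  moreover have "K \<subseteq> V"
    by (auto simp: K_def)
  ultimately obtain C where C: "span C \<subseteq> V" "V = {x + y |x y. x \<in> K \<and> y \<in> span C}"
    "K \<inter> span C \<subseteq> {0}" "dim V = dim K + dim (span C)"
    by (rule ex_complement_subspace)
  have "inj_on f (span C)"
    using C(1,3) by (subst f.inj_on_iff_eq_0[OF subspace_span]) (auto simp: K_def)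
  then have "dim (f ` span C) = dim (span C)"
    using f.module_hom_axioms
    by (intro pair.dim_image_eq) (auto simp: span_span module_hom_iff_linear)
  moreover have "f ` V = f ` span C"
  proof
    show "f ` V \<subseteq> f ` span C"
    proof
      fix z
      assume "z \<in> f ` V"
      then obtain x y where "z = f (x + y)" "x \<in> K" "y \<in> span C"
        using C(2) by blast
      then show "z \<in> f ` span C"
        by (simp add: K_def f.add)
    qed
  qed (use C(1) in blast)
  ultimately show ?thesis
    using C(4) K_def by simp
qed

end

locale fd_algebra = finite_dimensional_vector_space sc Basis
  for sc :: "'k::field \<Rightarrow> 'a::ring_1 \<Rightarrow> 'a" and Basis :: "'a set" +
  assumes scale_mult_left: "\<And>c x y. sc c (x * y) = sc c x * y"
    and scale_mult_right: "\<And>c x y. sc c (x * y) = x * sc c y"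
begin

lemma module_hom_mult_left: "module_hom sc sc (\<lambda>x. a * x)"
  unfolding module_hom_def module_hom_axioms_def
  using module_axioms by (simp add: distrib_left scale_mult_right)

lemma module_hom_mult_right: "module_hom sc sc (\<lambda>x. x * a)"
  unfolding module_hom_def module_hom_axioms_def
  using module_axioms by (simp add: distrib_right scale_mult_left)

lemma subspace_image_mult_left: "subspace S \<Longrightarrow> subspace ((\<lambda>x. a * x) ` S)"
  using module_hom.subspace_image[OF module_hom_mult_left] .

lemma subspace_image_mult_right: "subspace S \<Longrightarrow> subspace ((\<lambda>x. x * a) ` S)"
  using module_hom.subspace_image[OF module_hom_mult_right] .

lemma subspace_if_left_ideal:
  assumes "left_ideal J"
  shows "subspace J"
  unfolding subspace_def
proof (intro conjI ballI allI)
  fix c x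
  assume "x \<in> J"
  then have "sc c 1 * x \<in> J"
    using assms unfolding left_ideal_def by blast
  then show "sc c x \<in> J"
    by (metis scale_mult_left mult_1_left)
qed (use assms in \<open>auto simp: left_ideal_def\<close>)

lemma subspace_lann: "subspace (lann S)"
  by (rule subspace_if_left_ideal[OF left_ideal_lann])

lemma subspace_rann: "subspace (rann S)"
proof -
  have "rann S = (\<Inter>x\<in>S. {a. x * a = 0})"
    by (auto simp: rann_def)
  then show ?thesis
    by (simp add: subspace_Inter module_hom.subspace_kernel[OF module_hom_mult_left])
qed

lemma lann_antimono: "S \<subseteq> T \<Longrightarrow> lann T \<subseteq> lann S"
  unfolding lann_def by auto

lemma lann_span: "lann (span S) = lann S"
proof
  show "lann (span S) \<subseteq> lann S"
    by (rule lann_antimono[OF span_superset])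
  show "lann S \<subseteq> lann (span S)"
  proof
    fix a
    assume a: "a \<in> lann S"
    have "span S \<subseteq> {x. a * x = 0}"
      by (rule span_minimal)
        (use a module_hom.subspace_kernel[OF module_hom_mult_left] in \<open>auto simp: lann_def\<close>)
    then show "a \<in> lann (span S)"
      unfolding lann_def by auto
  qed
qed

lemma lann_sprod_UNIV: "lann (sprod sc W UNIV) = lann W"
proof -
  have "lann {u * w |u w. u \<in> W \<and> w \<in> UNIV} = lann W"
    unfolding lann_def by (auto simp: mult.assoc[symmetric]) (metis mult_1_right)
  then show ?thesis
    unfolding sprod_def by (simp add: lann_span)
qed

end

locale faithful_left_ideal = fd_algebra sc Basis
  for sc :: "'k::field \<Rightarrow> 'a::ring_1 \<Rightarrow> 'a" and Basis :: "'a set" +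
  fixes n :: nat and I :: "'a set"
  assumes left_ideal_I: "left_ideal I"
    and dim_I: "dim I = n"
    and dim_algebra: "dim (UNIV :: 'a set) = n\<^sup>2"
    and lann_I: "lann I = {0}"
begin

lemma subspace_I: "subspace I"
  by (rule subspace_if_left_ideal[OF left_ideal_I])

lemma mult_mem_I: "x \<in> I \<Longrightarrow> a * x \<in> I"
  using left_ideal_I unfolding left_ideal_def by blast

lemma n_pos: "n > 0"
proof (rule ccontr)
  assume "\<not> n > 0"
  then have "I \<subseteq> {0}"
    using dim_I by simp
  then have "(1::'a) \<in> lann I"
    by (auto simp: lann_def)
  then show False
    using lann_I by simp
qed

lemma dim_lann_le_insert:
  assumes "v \<in> I"
  shows "dim (lann S) \<le> dim (lann (insert v S)) + n"
proof -
  have "{a \<in> lann S. a * v = 0} = lann (insert v S)"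
    by (auto simp: lann_def)
  moreover have "dim ((\<lambda>a. a * v) ` lann S) \<le> n"
    using dim_subset[of "(\<lambda>a. a * v) ` lann S" I] mult_mem_I[OF assms] dim_I by auto
  ultimately show ?thesis
    using dim_kernel_plus_dim_image[OF subspace_lann module_hom_mult_right, of S v] by simp
qed

lemma dim_lann_le_union:
  assumes "finite T" and "T \<subseteq> I"
  shows "dim (lann S) \<le> dim (lann (T \<union> S)) + n * card T"
  using assms
proof (induction T rule: finite_induct)
  case (insert v T)
  then have "dim (lann (T \<union> S)) \<le> dim (lann (insert v T \<union> S)) + n"
    using dim_lann_le_insert[of v "T \<union> S"] by simp
  then show ?case
    using insert by simp
qed simp

lemma dim_lann_independent:
  assumes "independent S" and "S \<subseteq> I"
  shows "dim (lann S) + n * card S = n\<^sup>2"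
proof -
  obtain B where B: "S \<subseteq> B" "B \<subseteq> I" "independent B" "I \<subseteq> span B"
    by (rule maximal_independent_subset_extend[OF assms(2,1)])
  have "finite B"
    using B(3) by (rule finiteI_independent)
  then have "finite S"
    using B(1) finite_subset by blast
  have card_B: "card B = n"
    using basis_card_eq_dim[OF B(2) B(4) B(3)] dim_I by simp
  have "lann B \<subseteq> lann I"
    using lann_antimono[OF B(4)] lann_span by simp
  then have dim_lann_B: "dim (lann B) = 0"
    using lann_I by simp
  have "dim (lann S) \<le> dim (lann (B - S \<union> S)) + n * card (B - S)"
    by (rule dim_lann_le_union) (use \<open>finite B\<close> B(2) in auto)
  then have "dim (lann S) \<le> n * card (B - S)"
    using B(1) dim_lann_B by (simp add: Un_absorb2 del: dim_eq_0)
  moreover have "card (B - S) + card S = n"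
    using card_B card_Diff_subset[OF \<open>finite S\<close> B(1)] card_mono[OF \<open>finite B\<close> B(1)] by simp
  then have "n * card (B - S) + n * card S = n\<^sup>2"
    by (metis add_mult_distrib2 power2_eq_square)
  moreover have "n\<^sup>2 \<le> dim (lann S) + n * card S"
    using dim_lann_le_union[OF \<open>finite S\<close> assms(2), of "{}"] dim_algebra
    by (simp add: lann_def)
  ultimately show ?thesis
    by linarith
qed

lemma dim_lann_subspace:
  assumes "subspace W" and "W \<subseteq> I"
  shows "dim (lann W) + n * dim W = n\<^sup>2"
proof -
  obtain B where "B \<subseteq> W" "independent B" "span B = W" "card B = dim W"
    using basis_subspace_exists[OF assms(1)] by blast
  then show ?thesis
    using dim_lann_independent[of B] assms(2) lann_span[of B] by auto
qed

lemma image_mult_right_lann: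
  assumes "independent (insert v S)" and "insert v S \<subseteq> I" and "v \<notin> S"
  shows "(\<lambda>a. a * v) ` lann S = I"
proof (rule subspace_dim_equal)
  show "subspace ((\<lambda>a. a * v) ` lann S)"
    by (rule subspace_image_mult_right[OF subspace_lann])
  show "(\<lambda>a. a * v) ` lann S \<subseteq> I"
    using assms(2) mult_mem_I by auto
  have "independent S"
    using assms(1) independent_mono by blast
  then have "finite S"
    by (rule finiteI_independent)
  have "{a \<in> lann S. a * v = 0} = lann (insert v S)"
    by (auto simp: lann_def)
  then have "dim (lann S) = dim (lann (insert v S)) + dim ((\<lambda>a. a * v) ` lann S)"
    using dim_kernel_plus_dim_image[OF subspace_lann module_hom_mult_right, of S v] by simp
  moreover have "dim (lann S) + n * card S = n\<^sup>2"
    using dim_lann_independent \<open>independent S\<close> assms(2) by blast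
  moreover have "dim (lann (insert v S)) + n * (card S + 1) = n\<^sup>2"
    using dim_lann_independent[OF assms(1,2)] \<open>finite S\<close> assms(3) by simp
  ultimately show "dim I \<le> dim ((\<lambda>a. a * v) ` lann S)"
    using dim_I by simp
qed (rule subspace_I)

lemma ex_mult_eq_on_independent:
  assumes "independent S" and "S \<subseteq> I" and "g ` S \<subseteq> I"
  shows "\<exists>a. \<forall>s\<in>S. a * s = g s"
proof -
  have "finite S"
    using assms(1) by (rule finiteI_independent)
  then show ?thesis
    using assms
  proof (induction S rule: finite_induct)
    case (insert v S)
    then obtain a0 where a0: "\<forall>s\<in>S. a0 * s = g s"
      using independent_mono[of "insert v S" S] by blast
    have "g v - a0 * v \<in> I"
      using insert.prems subspace_diff[OF subspace_I] mult_mem_I by simp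
    then obtain b where b: "b \<in> lann S" "b * v = g v - a0 * v"
      using image_mult_right_lann[OF insert.prems(1,2) insert.hyps(2)] by (metis imageE)
    have "\<forall>s\<in>insert v S. (a0 + b) * s = g s"
      using a0 b by (auto simp: distrib_right lann_def)
    then show ?case
      by blast
  qed simp
qed

lemma ex_mult_rank_one:
  assumes "w \<in> I" and "w \<noteq> 0" and "t \<in> I"
  obtains h where "h * w = t" and "\<And>u. u \<in> I \<Longrightarrow> h * u \<in> span {t}"
proof -
  have "{w} \<subseteq> I"
    using assms(1) by simp
  moreover have "independent {w}"
    using assms(2) by (intro independent_insertI) (auto simp: span_empty independent_empty)
  ultimately obtain B where B: "{w} \<subseteq> B" "B \<subseteq> I" "independent B" "I \<subseteq> span B"
    by (rule maximal_independent_subset_extend)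
  define g where "g b = (if b = w then t else 0)" for b
  have "g ` B \<subseteq> I"
    using assms(3) subspace_0[OF subspace_I] by (auto simp: g_def)
  then obtain h where h: "\<forall>b\<in>B. h * b = g b"
    using ex_mult_eq_on_independent[OF B(3) B(2)] by blast
  have "span B \<subseteq> (\<lambda>u. h * u) -` span {t}"
  proof (rule span_minimal)
    show "subspace ((\<lambda>u. h * u) -` span {t})"
      by (rule module_hom.subspace_vimage[OF module_hom_mult_left subspace_span])
    show "B \<subseteq> (\<lambda>u. h * u) -` span {t}"
      using h by (auto simp: g_def span_base span_zero)
  qed
  then have "h * u \<in> span {t}" if "u \<in> I" for u
    using B(4) that by blast
  moreover have "h * w = t"
    using h B(1) by (simp add: g_def)
  ultimately show thesis
    using that by blast
qed

lemma rann_lann_inter: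
  assumes "subspace W" and "W \<subseteq> I"
  shows "rann (lann W) \<inter> I = W"
proof -
  let ?W = "rann (lann W) \<inter> I"
  have sub: "W \<subseteq> ?W"
    using assms(2) by (auto simp: rann_def lann_def)
  have "subspace ?W"
    by (rule subspace_inter[OF subspace_rann subspace_I])
  moreover have "lann ?W = lann W"
    using lann_antimono[OF sub] by (auto simp: lann_def rann_def)
  ultimately have "dim (lann W) + n * dim ?W = n\<^sup>2"
    using dim_lann_subspace[of ?W] by simp
  then have "n * dim ?W = n * dim W"
    using dim_lann_subspace[OF assms] by linarith
  then have "dim ?W = dim W"
    using n_pos by simp
  then show ?thesis
    using subspace_dim_equal[OF assms(1) \<open>subspace ?W\<close> sub] by simp
qed

lemma ex_right_unit:
  obtains e where "e \<in> I" and "\<And>y. y \<in> I \<Longrightarrow> y * e = y"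
proof -
  obtain x z where xz: "x \<in> I" "z \<in> I" "x * z \<noteq> 0"
  proof (rule ccontr)
    assume "\<not> thesis"
    then have "I \<subseteq> lann I"
      using that by (auto simp: lann_def)
    then have "I \<subseteq> {0}"
      using lann_I by simp
    then show False
      using dim_I n_pos dim_eq_0[of I] by simp
  qed
  have kernel: "{y \<in> I. y * z = 0} \<subseteq> {0}"
  proof (rule ccontr)
    assume "\<not> ?thesis"
    then obtain w where "w \<in> I" "w * z = 0" "w \<noteq> 0"
      by blast
    then obtain h where "h * w = x"
      using ex_mult_rank_one xz(1) by metis
    then have "x * z = h * (w * z)"
      by (metis mult.assoc)
    then show False
      using \<open>w * z = 0\<close> xz(3) by simp
  qed
  have "(\<lambda>y. y * z) ` I = I"
  proof (rule subspace_dim_equal)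
    show "(\<lambda>y. y * z) ` I \<subseteq> I"
      using mult_mem_I xz(2) by auto
    have "dim {y \<in> I. y * z = 0} = 0"
      using kernel by (simp only: dim_eq_0)
    then show "dim I \<le> dim ((\<lambda>y. y * z) ` I)"
      using dim_kernel_plus_dim_image[OF subspace_I module_hom_mult_right, of z] by simp
  qed (simp_all add: subspace_I subspace_image_mult_right)
  then obtain e where e: "e \<in> I" "e * z = z"
    using xz(2) by (metis (no_types, lifting) imageE)
  have "y * e = y" if "y \<in> I" for y
  proof -
    have "y * e - y \<in> I"
      using subspace_diff[OF subspace_I mult_mem_I[OF e(1)] that] .
    moreover have "(y * e - y) * z = 0"
      using e(2) by (simp add: left_diff_distrib mult.assoc)
    ultimately show ?thesis
      using kernel by auto
  qed
  then show thesis
    using that e(1) by blast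
qed

lemma sprod_rann_I: "sprod sc (rann J) I = rann J \<inter> I"
proof
  show "sprod sc (rann J) I \<subseteq> rann J \<inter> I"
    unfolding sprod_def
  proof (rule span_minimal)
    show "subspace (rann J \<inter> I)"
      by (rule subspace_inter[OF subspace_rann subspace_I])
    show "{u * w |u w. u \<in> rann J \<and> w \<in> I} \<subseteq> rann J \<inter> I"
      using mult_mem_I by (auto simp: rann_def mult.assoc[symmetric])
  qed
  obtain e where e: "e \<in> I" "\<And>y. y \<in> I \<Longrightarrow> y * e = y"
    using ex_right_unit by blast
  show "rann J \<inter> I \<subseteq> sprod sc (rann J) I"
  proof
    fix y
    assume y: "y \<in> rann J \<inter> I"
    then have "y = y * e"
      using e(2) by simp
    then have "y \<in> {u * w |u w. u \<in> rann J \<and> w \<in> I}"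
      using y e(1) by blast
    then show "y \<in> sprod sc (rann J) I"
      unfolding sprod_def by (rule span_base)
  qed
qed

lemma subspace_kernel_in_I: "subspace {u \<in> I. x * u = 0}"
  using subspace_inter[OF subspace_I module_hom.subspace_kernel[OF module_hom_mult_left]]
  by (simp add: Int_def)

text \<open>Pick t \<in> I outside x I and h sending y v to t and all of I into span {t}; then x + h y
  kills nothing in I that x does not kill, but no longer kills v.\<close>

lemma ex_smaller_kernel:
  assumes "left_ideal J" and "x \<in> J" and "y \<in> J"
    and "v \<in> I" and "x * v = 0" and "y * v \<noteq> 0"
  obtains x' where "x' \<in> J" and "{u \<in> I. x' * u = 0} \<subset> {u \<in> I. x * u = 0}"
proof -
  let ?K = "{u \<in> I. x * u = 0}" and ?xI = "(\<lambda>u. x * u) ` I"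
  have "v \<noteq> 0"
    using assms(6) by auto
  then have "1 \<le> dim ?K"
    using dim_subset[of "{v}" ?K] assms(4,5) by simp
  then have "dim ?xI < dim I"
    using dim_kernel_plus_dim_image[OF subspace_I module_hom_mult_left, of x] by simp
  then obtain t where t: "t \<in> I" "t \<notin> ?xI"
    by (metis dim_subset not_le subsetI)
  have xI: "subspace ?xI"
    by (rule subspace_image_mult_left[OF subspace_I])
  obtain h where h: "h * (y * v) = t" "\<And>u. u \<in> I \<Longrightarrow> h * u \<in> span {t}"
    using ex_mult_rank_one[OF mult_mem_I[OF assms(4)] assms(6) t(1)] by blast
  define x' where "x' = x + h * y"
  have mult_x': "x' * u = x * u + h * (y * u)" for u
    by (simp add: x'_def distrib_right mult.assoc)
  have "x' \<in> J"
    using assms(1-3) unfolding x'_def left_ideal_def by blast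
  have "x * u = 0" if u: "u \<in> I" and x'_u: "x' * u = 0" for u
  proof -
    obtain c where c: "h * (y * u) = sc c t"
      using h(2)[OF mult_mem_I[OF u]] by (auto simp: span_singleton)
    have "sc c t = x * (- u)"
      using x'_u c mult_x'[of u] by (simp add: eq_neg_iff_add_eq_0 add.commute)
    then have "sc c t \<in> ?xI"
      using subspace_neg[OF subspace_I u] by blast
    then have "c = 0"
      using subspace_scale[OF xI, of "sc c t" "inverse c"] t(2) by (cases "c = 0") auto
    then show ?thesis
      using x'_u c mult_x'[of u] by simp
  qed
  then have "{u \<in> I. x' * u = 0} \<subseteq> ?K"
    by blast
  moreover have "t \<noteq> 0"
    using t(2) subspace_0[OF xI] by auto
  then have "v \<notin> {u \<in> I. x' * u = 0}"
    using mult_x'[of v] h(1) assms(5) by simp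
  ultimately show thesis
    using that \<open>x' \<in> J\<close> assms(4,5) by blast
qed

text \<open>An element of J whose kernel on I has least dimension kills only what all of J kills,
  for otherwise the previous lemma would shrink that kernel further.\<close>

lemma ex_kernel_eq_rann_inter:
  assumes "left_ideal J"
  obtains x where "x \<in> J" and "{u \<in> I. x * u = 0} = rann J \<inter> I"
proof -
  have "0 \<in> J"
    using assms by (simp add: left_ideal_def)
  then obtain x where x: "x \<in> J"
    and minimal: "\<And>x'. x' \<in> J \<Longrightarrow> dim {u \<in> I. x * u = 0} \<le> dim {u \<in> I. x' * u = 0}"
    using ex_has_least_nat[of "\<lambda>x. x \<in> J" 0 "\<lambda>x. dim {u \<in> I. x * u = 0}"] by blast
  have "{u \<in> I. x * u = 0} \<subseteq> rann J \<inter> I"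
  proof (rule ccontr)
    assume "\<not> ?thesis"
    then obtain v y where "y \<in> J" "v \<in> I" "x * v = 0" "y * v \<noteq> 0"
      by (auto simp: rann_def)
    then obtain x' where x': "x' \<in> J" "{u \<in> I. x' * u = 0} \<subset> {u \<in> I. x * u = 0}"
      by (rule ex_smaller_kernel[OF assms x])
    have "{u \<in> I. x' * u = 0} = {u \<in> I. x * u = 0}"
      by (rule subspace_dim_equal[OF subspace_kernel_in_I subspace_kernel_in_I _ minimal[OF x'(1)]])
        (use x'(2) in blast)
    then show False
      using x'(2) by blast
  qed
  moreover have "rann J \<inter> I \<subseteq> {u \<in> I. x * u = 0}"
    using x by (auto simp: rann_def)
  ultimately show thesis
    using that x by blast
qed

lemma dim_range_mult_right: "dim (range (\<lambda>a. a * x)) = n * dim ((\<lambda>u. x * u) ` I)"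
proof -
  have "{a \<in> UNIV. a * x = 0} = lann ((\<lambda>u. x * u) ` I)"
  proof (intro equalityI subsetI)
    fix a
    assume "a \<in> lann ((\<lambda>u. x * u) ` I)"
    then have "a * x \<in> lann I"
      by (auto simp: lann_def mult.assoc)
    then show "a \<in> {a \<in> UNIV. a * x = 0}"
      using lann_I by simp
  qed (auto simp: lann_def mult.assoc[symmetric])
  then have "n\<^sup>2 = dim (lann ((\<lambda>u. x * u) ` I)) + dim (range (\<lambda>a. a * x))"
    using dim_kernel_plus_dim_image[OF subspace_UNIV module_hom_mult_right, of x] dim_algebra
    by simp
  moreover have "dim (lann ((\<lambda>u. x * u) ` I)) + n * dim ((\<lambda>u. x * u) ` I) = n\<^sup>2"
    using dim_lann_subspace[OF subspace_image_mult_left[OF subspace_I]] mult_mem_I by blast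
  ultimately show ?thesis
    by linarith
qed

lemma lann_rann_inter:
  assumes "left_ideal J"
  shows "lann (rann J \<inter> I) = J"
proof (rule sym, rule subspace_dim_equal)
  let ?W = "rann J \<inter> I"
  obtain x where x: "x \<in> J" "{u \<in> I. x * u = 0} = ?W"
    using ex_kernel_eq_rann_inter[OF assms] by blast
  have "n = dim ?W + dim ((\<lambda>u. x * u) ` I)"
    using dim_kernel_plus_dim_image[OF subspace_I module_hom_mult_left, of x] x(2) dim_I by simp
  moreover have "dim (lann ?W) + n * dim ?W = n\<^sup>2"
    using dim_lann_subspace[OF subspace_inter[OF subspace_rann subspace_I]] by blast
  ultimately have "dim (lann ?W) = n * dim ((\<lambda>u. x * u) ` I)"
    by (simp add: power2_eq_square add_mult_distrib2)
  also have "\<dots> = dim (range (\<lambda>a. a * x))"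
    by (rule dim_range_mult_right[symmetric])
  also have "\<dots> \<le> dim J"
    using assms x(1) by (intro dim_subset) (auto simp: left_ideal_def)
  finally show "dim (lann ?W) \<le> dim J" .
  show "J \<subseteq> lann ?W"
    by (auto simp: lann_def rann_def)
qed (simp_all add: subspace_if_left_ideal assms subspace_lann)

lemma rann_inter_mem_subspaces:
  assumes "left_ideal J" and "I \<subseteq> J" and "int (dim J) = int n * j"
  shows "subspace (rann J \<inter> I) \<and> rann J \<inter> I \<subseteq> rann I \<inter> I \<and> int (dim (rann J \<inter> I)) = int n - j"
proof -
  have "subspace (rann J \<inter> I)"
    by (rule subspace_inter[OF subspace_rann subspace_I])
  moreover have "dim J + n * dim (rann J \<inter> I) = n\<^sup>2"
    using dim_lann_subspace[OF \<open>subspace (rann J \<inter> I)\<close>] lann_rann_inter[OF assms(1)] by simp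
  ultimately show ?thesis
    using assms(2,3) int_mult_eq_iff_diff_eq[OF _ n_pos] by (auto simp: rann_def)
qed

lemma lann_mem_left_ideals:
  assumes "subspace W" and "W \<subseteq> rann I \<inter> I" and "int (dim W) = int n - j"
  shows "left_ideal (lann W) \<and> I \<subseteq> lann W \<and> int (dim (lann W)) = int n * j"
  using assms left_ideal_lann dim_lann_subspace[OF assms(1)] int_mult_eq_iff_diff_eq[OF _ n_pos]
  by (auto simp: lann_def rann_def)

lemma bij_betw_rann_inter:
  "bij_betw (\<lambda>J. rann J \<inter> I)
     {J. left_ideal J \<and> I \<subseteq> J \<and> int (dim J) = int n * j}
     {W. subspace W \<and> W \<subseteq> rann I \<inter> I \<and> int (dim W) = int n - j}"
  (is "bij_betw _ ?S ?T")
proof (rule bij_betw_byWitness[where f' = lann])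
  show "\<forall>J\<in>?S. lann (rann J \<inter> I) = J"
    using lann_rann_inter by blast
  show "\<forall>W\<in>?T. rann (lann W) \<inter> I = W"
    using rann_lann_inter by blast
  show "(\<lambda>J. rann J \<inter> I) ` ?S \<subseteq> ?T"
    using rann_inter_mem_subspaces by blast
  show "lann ` ?T \<subseteq> ?S"
    using lann_mem_left_ideals by blast
qed

end

lemma ex_fd_algebra:
  assumes "k_algebra sc" and "fin_dim_alg sc"
  obtains Basis where "fd_algebra sc Basis"
proof -
  interpret vector_space sc
    using assms(1) by (simp add: k_algebra_def)
  obtain B0 where B0: "finite B0" "span B0 = UNIV"
    using assms(2) by (auto simp: fin_dim_alg_def)
  obtain B where B: "B \<subseteq> B0" "independent B" "B0 \<subseteq> span B"
    using maximal_independent_subset[of B0] by blast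
  have "UNIV \<subseteq> span B"
    using span_mono[OF B(3)] B0(2) by (simp add: span_span)
  then have "span B = UNIV"
    by blast
  then have "fd_algebra sc B"
    using assms(1) B(1,2) finite_subset[OF B(1) B0(1)]
    by unfold_locales (auto simp: k_algebra_def)
  then show thesis
    by (rule that)
qed

theorem proposition4p14:
  fixes sc :: "'k::field \<Rightarrow> 'a::ring_1 \<Rightarrow> 'a" and n :: nat and I :: "'a set" and j :: int
  assumes "csa_of_degree sc n"
    and "left_ideal I" and "vector_space.dim sc I = n"
  shows "bij_betw (\<lambda>J. sprod sc (rann J) I)
           {J. left_ideal J \<and> I \<subseteq> J \<and> int (vector_space.dim sc J) = int n * j}
           {W. module.subspace sc W \<and> W \<subseteq> sprod sc (rann I) I \<and> int (vector_space.dim sc W) = int n - j}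
       \<and> (\<forall>W. module.subspace sc W \<and> W \<subseteq> sprod sc (rann I) I \<and> int (vector_space.dim sc W) = int n - j
            \<longrightarrow> left_ideal (lann (sprod sc W UNIV)) \<and> I \<subseteq> lann (sprod sc W UNIV)
                \<and> int (vector_space.dim sc (lann (sprod sc W UNIV))) = int n * j
                \<and> sprod sc (rann (lann (sprod sc W UNIV))) I = W)"
proof -
  have alg: "k_algebra sc" "fin_dim_alg sc" and simple: "simple_alg TYPE('a)"
    and dim_algebra: "vector_space.dim sc (UNIV :: 'a set) = n\<^sup>2"
    using assms(1) by (auto simp: csa_of_degree_def)
  obtain Basis where "fd_algebra sc Basis"
    using ex_fd_algebra[OF alg] .
  then interpret A: fd_algebra sc Basis .
  have "\<not> (UNIV :: 'a set) \<subseteq> {0}"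
    using subsetD[of UNIV "{0}" "1::'a"] by auto
  then have "n \<noteq> 0"
    using dim_algebra A.dim_eq_0[of UNIV] by (simp del: A.dim_UNIV)
  then have "I \<noteq> {0}"
    using assms(3) A.dim_eq_0[of "{0}"] by auto
  then interpret faithful_left_ideal sc Basis n I
    using assms(2,3) dim_algebra lann_eq_0_if_simple[OF simple assms(2)] by unfold_locales
  show ?thesis
    unfolding sprod_rann_I A.lann_sprod_UNIV
    using bij_betw_rann_inter[of j] lann_mem_left_ideals[of _ j] rann_lann_inter by simp
qed

end
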